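(* Let $d\ge1$, $n\ge2$ be integers, $\kappa_d$ the volume of the $d$-dimensional unit ball, $V\ge0$, $c\in(0,\infty)$, $-d/2<\tau_1<\dots<\tau_n$ reals, $a_i=\tau_i+d$, $x_i=\tau_i+d/2$. Let $\Sigma_n^{\mathrm{sb}}$ have entries $\frac{Vd\kappa_d}{2(x_i+x_j)}$, $\Sigma_n^{\mathrm{sp}}$ entries $\frac{Vd^2\kappa_d^2}{a_ia_j}$, and $\Sigma_n=\Sigma_n^{\mathrm{sb}}+c\Sigma_n^{\mathrm{sp}}$ if $c\le1$, $\Sigma_n=\frac1c\Sigma_n^{\mathrm{sb}}+\Sigma_n^{\mathrm{sp}}$ if $c>1$. Define $$D=\Bigg(1+\sum_{j=1}^n\frac{cd\kappa_d}{a_j}\Bigg(\frac{4x_j\prod_{k\in[n]\setminus\{j\}}(x_k+x_j)^2}{a_j\prod_{k\in[n]\setminus\{j\}}(x_k-x_j)^2}-\sum_{i\in[n]\setminus\{j\}}\frac{8x_ix_j(x_i+x_j)\prod_{l\in[n]\setminus\{i,j\},\,k\in\{i,j\}}(x_k+x_l)}{a_i(x_j-x_i)^2\prod_{l\in[n]\setminus\{i,j\},\,k\in\{i,j\}}(x_k-x_l)}\Bigg)\Bigg)\frac{\prod_{1\le i<j\le n}(x_i-x_j)^2}{\prod_{1\le i,j\le n}(x_i+x_j)}.$$ Then $\det(\Sigma_n)=D\big(\frac{Vd\kappa_d}{2}\big)^n$ for $c\in(0,1]$ and $\det(\Sigma_n)=D\big(\frac{Vd\kappa_d}{2c}\big)^n$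 for $c\in(1,\infty)$.
   Context: $\Sigma_n$ is the asymptotic covariance matrix of normalized length power functionals in the critical regime $t\delta_t^d\to c$. $[n]=\{1,\dots,n\}$; products over "$l\in A,\,k\in\{i,j\}$" run over all such pairs $(l,k)$. *)

theory Defs
  imports "HOL-Analysis.Ball_Volume" "Jordan_Normal_Form.Determinant"
begin

(* Indices are shifted: paper index i\<in>[n]={1..n} corresponds to i-1 \<in> {0..<n}. *)

definition kappa :: "nat \<Rightarrow> real" where
  "kappa d = unit_ball_vol (real d)"

definition aa :: "nat \<Rightarrow> (nat \<Rightarrow> real) \<Rightarrow> nat \<Rightarrow> real" where
  "aa d \<tau> i = \<tau> i + real d"

definition xx :: "nat \<Rightarrow> (nat \<Rightarrow> real) \<Rightarrow> nat \<Rightarrow> real" where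
  "xx d \<tau> i = \<tau> i + real d / 2"

definition Sigma_sb :: "nat \<Rightarrow> nat \<Rightarrow> real \<Rightarrow> (nat \<Rightarrow> real) \<Rightarrow> real mat" where
  "Sigma_sb n d V \<tau> = mat n n (\<lambda>(i,j). V * real d * kappa d / (2 * (xx d \<tau> i + xx d \<tau> j)))"

definition Sigma_sp :: "nat \<Rightarrow> nat \<Rightarrow> real \<Rightarrow> (nat \<Rightarrow> real) \<Rightarrow> real mat" where
  "Sigma_sp n d V \<tau> = mat n n (\<lambda>(i,j). V * (real d)^2 * (kappa d)^2 / (aa d \<tau> i * aa d \<tau> j))"

definition Sigma :: "nat \<Rightarrow> nat \<Rightarrow> real \<Rightarrow> real \<Rightarrow> (nat \<Rightarrow> real) \<Rightarrow> real mat" where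
  "Sigma n d V c \<tau> = (if c \<le> 1 then Sigma_sb n d V \<tau> + c \<cdot>\<^sub>m Sigma_sp n d V \<tau>
                     else (1 / c) \<cdot>\<^sub>m Sigma_sb n d V \<tau> + Sigma_sp n d V \<tau>)"

definition DD :: "nat \<Rightarrow> nat \<Rightarrow> real \<Rightarrow> (nat \<Rightarrow> real) \<Rightarrow> real" where
  "DD n d c \<tau> =
    (let x = xx d \<tau>; a = aa d \<tau>; N = {0..<n} in
     (1 + (\<Sum>j\<in>N. c * real d * kappa d / a j *
        (4 * x j * (\<Prod>k\<in>N - {j}. (x k + x j)^2) / (a j * (\<Prod>k\<in>N - {j}. (x k - x j)^2))
         - (\<Sum>i\<in>N - {j}. 8 * x i * x j * (x i + x j) *
              (\<Prod>l\<in>N - {i,j}. \<Prod>k\<in>{i,j}. x k + x l) /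
              (a i * (x j - x i)^2 * (\<Prod>l\<in>N - {i,j}. \<Prod>k\<in>{i,j}. x k - x l))))))
     * (\<Prod>j\<in>N. \<Prod>i\<in>{0..<j}. (x i - x j)^2) / (\<Prod>i\<in>N. \<Prod>j\<in>N. x i + x j))"

end

theory Submission
  imports Defs
begin

text \<open>
  With x_i = \<tau>_i + d/2 and a_i = \<tau>_i + d, the matrix \<Sigma>_n equals K C + 2 c d \<kappa>_d K u u^T,
  where C = (1/(x_i + x_j)) is a symmetric Cauchy matrix, u_i = 1/a_i and K = V d \<kappa>_d/2
  (resp. V d \<kappa>_d/(2c)). The matrix determinant lemma expresses det \<Sigma>_n through det C and the
  cofactors of C. Cauchy's formula gives det C = \<Prod>_{i<j} (x_i - x_j)^2 / \<Prod>_{i,j} (x_i + x_j), and since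
  every minor of a Cauchy matrix is again a Cauchy matrix, each cofactor is det C times an explicit
  rational function of x; collecting these terms gives D.
\<close>

section \<open>Elementary determinant identities\<close>

lemma det_add_row_multiples:
  fixes A :: "'a::comm_ring_1 mat"
  assumes A: "A \<in> carrier_mat n n" and k: "k < n"
  shows "det (mat n n (\<lambda>(i,j). A $$ (i,j) + (if i = k then 0 else c i * A $$ (k,j)))) = det A"
proof -
  define B where "B r = mat n n (\<lambda>(i,j). A $$ (i,j) + (if i < r \<and> i \<noteq> k then c i * A $$ (k,j) else 0))"
    for r
  have det_B: "det (B r) = det A" for r
  proof (induction r)
    case 0
    have "B 0 = A" using A by (auto simp: B_def intro!: eq_matI)
    then show ?case by simp
  next
    case (Suc r)
    show ?case
    proof (cases "r < n \<and> r \<noteq> k")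
      case True
      have "B (Suc r) = addrow (c r) r k (B r)"
        using True k by (auto simp: B_def intro!: eq_matI)
      also have "det \<dots> = det (B r)"
        by (rule det_addrow[OF k]) (use True in \<open>auto simp: B_def\<close>)
      finally show ?thesis using Suc.IH by simp
    next
      case False
      then have "B (Suc r) = B r" by (auto simp: B_def intro!: eq_matI)
      then show ?thesis using Suc.IH by simp
    qed
  qed
  have "B n = mat n n (\<lambda>(i,j). A $$ (i,j) + (if i = k then 0 else c i * A $$ (k,j)))"
    by (auto simp: B_def intro!: eq_matI)
  with det_B[of n] show ?thesis by simp
qed

lemma det_add_col_multiples:
  fixes A :: "'a::comm_ring_1 mat"
  assumes A: "A \<in> carrier_mat n n" and k: "k < n"
  shows "det (mat n n (\<lambda>(i,j). A $$ (i,j) + (if j = k then 0 else c j * A $$ (i,k)))) = det A"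
proof -
  let ?M = "mat n n (\<lambda>(i,j). A $$ (i,j) + (if j = k then 0 else c j * A $$ (i,k)))"
  have "transpose_mat ?M =
      mat n n (\<lambda>(i,j). transpose_mat A $$ (i,j) + (if i = k then 0 else c i * transpose_mat A $$ (k,j)))"
    using A k by (auto intro!: eq_matI)
  then have "det (transpose_mat ?M) = det (transpose_mat A)"
    using det_add_row_multiples[of "transpose_mat A" n k c] A k by simp
  moreover have "det (transpose_mat ?M) = det ?M"
    using det_transpose[of ?M n] by simp
  ultimately show ?thesis using A by (simp add: det_transpose)
qed

lemma det_scale_rows_cols:
  fixes N :: "nat \<Rightarrow> nat \<Rightarrow> 'a::comm_ring_1"
  shows "det (mat m m (\<lambda>(i,j). \<alpha> i * \<beta> j * N i j)) =
    (\<Prod>i<m. \<alpha> i) * (\<Prod>j<m. \<beta> j) * det (mat m m (\<lambda>(i,j). N i j))"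
proof -
  have "signof p * (\<Prod>i=0..<m. \<alpha> i * \<beta> (p i) * N i (p i)) =
      (\<Prod>i<m. \<alpha> i) * (\<Prod>j<m. \<beta> j) * (signof p * (\<Prod>i=0..<m. N i (p i)))"
    if p: "p permutes {0..<m}" for p
  proof -
    have "(\<Prod>i=0..<m. \<beta> (p i)) = (\<Prod>i=0..<m. \<beta> i)"
      using prod.permute[OF p, of \<beta>] by (simp add: comp_def)
    then show ?thesis by (simp add: prod.distrib atLeast0LessThan)
  qed
  moreover have "(\<Prod>i=0..<m. mat m m (\<lambda>(i,j). \<alpha> i * \<beta> j * N i j) $$ (i, p i)) =
      (\<Prod>i=0..<m. \<alpha> i * \<beta> (p i) * N i (p i))"
    and "(\<Prod>i=0..<m. mat m m (\<lambda>(i,j). N i j) $$ (i, p i)) = (\<Prod>i=0..<m. N i (p i))"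
    if "p permutes {0..<m}" for p
    using that by (auto intro!: prod.cong simp: permutes_in_image)
  ultimately show ?thesis
    by (simp add: det_def'[of _ m] sum_distrib_left)
qed

lemma det_replace_row:
  fixes A :: "'a::comm_ring_1 mat"
  assumes A: "A \<in> carrier_mat n n" and k: "k < n"
  shows "det (mat n n (\<lambda>(i,j). if i = k then w j else A $$ (i,j))) = (\<Sum>j<n. w j * cofactor A k j)"
proof -
  let ?N = "mat n n (\<lambda>(i,j). if i = k then w j else A $$ (i,j))"
  have "mat_delete ?N k j = mat_delete A k j" for j
    using A by (auto simp: mat_delete_def intro!: eq_matI)
  then show ?thesis
    using laplace_expansion_row[of ?N n k] k by (simp add: cofactor_def)
qed

lemma cofactor_smult:
  assumes "A \<in> carrier_mat n n" and "0 < n"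
  shows "cofactor (K \<cdot>\<^sub>m A) i j = K ^ (n - 1) * cofactor A i j"
proof -
  have "mat_delete (K \<cdot>\<^sub>m A) i j = K \<cdot>\<^sub>m mat_delete A i j"
    using assms by (auto simp: mat_delete_def intro!: eq_matI)
  then show ?thesis using assms by (simp add: cofactor_def)
qed

lemma det_plus_rank_one:
  fixes A :: "'a::comm_ring_1 mat"
  assumes A: "A \<in> carrier_mat n n"
  shows "det (A + mat n n (\<lambda>(i,j). u i * v j)) = det A + (\<Sum>i<n. \<Sum>j<n. u i * v j * cofactor A i j)"
proof -
  define B where "B k = mat n n (\<lambda>(i,j). A $$ (i,j) + (if i < k then u i * v j else 0))" for k
  have B_carrier: "B k \<in> carrier_mat n n" for k by (simp add: B_def)
  have det_B: "det (B k) = det A + (\<Sum>i<k. \<Sum>j<n. u i * v j * cofactor A i j)" if "k \<le> n" for k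
    using that
  proof (induction k)
    case 0
    have "B 0 = A" using A by (auto simp: B_def intro!: eq_matI)
    then show ?case by simp
  next
    case (Suc k)
    then have k: "k < n" by simp
    define R where "R = mat n n (\<lambda>(i,j). if i = k then v j else A $$ (i,j))"
    have R_carrier: "R \<in> carrier_mat n n" by (simp add: R_def)
    define rows where "rows w = mat\<^sub>r n n (\<lambda>i. if i = k then w else row (B k) i)" for w
    have "B (Suc k) = rows (row A k + u k \<cdot>\<^sub>v vec n v)"
      using A by (auto simp: B_def rows_def intro!: eq_matI)
    also have "det \<dots> = det (rows (row A k)) + det (rows (u k \<cdot>\<^sub>v vec n v))"
      unfolding rows_def by (rule det_row_add) (use A k B_carrier in auto)
    also have "rows (row A k) = B k"
      using A by (auto simp: B_def rows_def intro!: eq_matI)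
    \<comment> \<open>The rows of \<open>B k\<close> above row \<open>k\<close> differ from those of \<open>A\<close> by multiples of \<open>v\<close>.\<close>
    also have "rows (u k \<cdot>\<^sub>v vec n v) = multrow k (u k)
        (mat n n (\<lambda>(i,j). R $$ (i,j) + (if i = k then 0 else (if i < k then u i else 0) * R $$ (k,j))))"
      using k by (auto simp: rows_def B_def R_def mat_multrow_def intro!: eq_matI)
    also have "det \<dots> = u k * det R"
      by (simp add: det_multrow[OF k] det_add_row_multiples[OF R_carrier k])
    also have "det R = (\<Sum>j<n. v j * cofactor A k j)"
      unfolding R_def by (rule det_replace_row[OF A k])
    finally show ?case
      using Suc by (simp add: sum_distrib_left mult.assoc)
  qed
  have "B n = A + mat n n (\<lambda>(i,j). u i * v j)"
    using A by (auto simp: B_def intro!: eq_matI)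
  with det_B[of n] show ?thesis by simp
qed

section \<open>Cauchy matrices\<close>

definition cauchy_mat :: "nat \<Rightarrow> (nat \<Rightarrow> 'a::field) \<Rightarrow> (nat \<Rightarrow> 'a) \<Rightarrow> 'a mat"
  where
  "cauchy_mat m x y = mat m m (\<lambda>(a,b). 1 / (x a + y b))"

definition diff_prod :: "(nat \<Rightarrow> 'a::comm_ring_1) \<Rightarrow> nat \<Rightarrow> 'a" where
  "diff_prod x m = (\<Prod>b<m. \<Prod>a<b. x a - x b)"

definition cross_sum_prod :: "(nat \<Rightarrow> 'a::comm_ring_1) \<Rightarrow> (nat \<Rightarrow> 'a) \<Rightarrow> nat \<Rightarrow> 'a"
  where
  "cross_sum_prod x y m = (\<Prod>a<m. \<Prod>b<m. x a + y b)"

lemma diff_prod_Suc: "diff_prod x (Suc m) = diff_prod x m * (\<Prod>a<m. x a - x m)"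
  by (simp add: diff_prod_def)

lemma cross_sum_prod_Suc:
  "cross_sum_prod x y (Suc m) =
    cross_sum_prod x y m * (\<Prod>a<m. x a + y m) * (\<Prod>b<m. x m + y b) * (x m + y m)"
  by (simp add: cross_sum_prod_def prod.distrib mult_ac)

text \<open>Subtracting the last row from the others and then suitable multiples of the last column
  from the other columns leaves a scaled copy of the smaller Cauchy matrix, bordered by a last row
  that vanishes off the diagonal.\<close>

lemma det_cauchy_mat_Suc:
  fixes x y :: "nat \<Rightarrow> 'a::field"
  assumes nz: "\<And>a b. a < Suc m \<Longrightarrow> b < Suc m \<Longrightarrow> x a + y b \<noteq> 0"
  shows "det (cauchy_mat (Suc m) x y) =
    (\<Prod>a<m. (x m - x a) * (y m - y a) / ((x a + y m) * (x m + y a))) / (x m + y m)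
      * det (cauchy_mat m x y)"
proof -
  define s where "s = x m + y m"
  define M where "M = cauchy_mat (Suc m) x y"
  define E where "E = mat (Suc m) (Suc m) (\<lambda>(i,j). M $$ (i,j) + (if i = m then 0 else - 1 * M $$ (m,j)))"
  define P where "P = mat (Suc m) (Suc m)
    (\<lambda>(i,j). E $$ (i,j) + (if j = m then 0 else - (s / (x m + y j)) * E $$ (i,m)))"
  define \<alpha> where "\<alpha> i = (x m - x i) / (x i + y m)" for i
  define \<beta> where "\<beta> j = (y m - y j) / (x m + y j)" for j
  have M_carrier: "M \<in> carrier_mat (Suc m) (Suc m)" by (simp add: M_def cauchy_mat_def)
  have P_carrier: "P \<in> carrier_mat (Suc m) (Suc m)" by (simp add: P_def)
  have "det P = det E"
    unfolding P_def by (rule det_add_col_multiples) (auto simp: E_def)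
  also have "det E = det M"
    unfolding E_def by (rule det_add_row_multiples[OF M_carrier]) simp
  finally have det_P: "det P = det M" .
  have s0: "s \<noteq> 0" using nz by (simp add: s_def)
  have P_entry: "P $$ (i,j) = (1/(x i + y j) - 1/(x m + y j)) - s/(x m + y j) * (1/(x i + y m) - 1/s)"
    if "i < Suc m" "j < Suc m" "i \<noteq> m" "j \<noteq> m" for i j
    using that by (simp add: P_def E_def M_def cauchy_mat_def s_def)
  have P_last_row: "P $$ (m,j) = (if j = m then 1 / s else 0)" if "j < Suc m" for j
    using that nz[of m j] s0 by (auto simp: P_def E_def M_def cauchy_mat_def s_def)
  have P_inner: "P $$ (i,j) = \<alpha> i * \<beta> j * (1 / (x i + y j))" if "i < m" "j < m" for i j
  proof -
    have nz': "x m + y j \<noteq> 0" "x i + y m \<noteq> 0" "x i + y j \<noteq> 0" using nz that by simp_all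
    have alg: "(1/A - 1/B) - S/B * (1/C - 1/S) = (B*C - A*S) / (A*B*C)"
      if "A \<noteq> 0" "B \<noteq> 0" "C \<noteq> 0" "S \<noteq> 0" for A B C S :: 'a
      using that by (simp add: field_simps)
    have "P $$ (i,j) = (1/(x i + y j) - 1/(x m + y j)) - s/(x m + y j) * (1/(x i + y m) - 1/s)"
      using that by (intro P_entry) auto
    also have "\<dots> = ((x m + y j) * (x i + y m) - (x i + y j) * s) / ((x i + y j) * (x m + y j) * (x i + y m))"
      by (intro alg) (use s0 nz' in auto)
    also have "(x m + y j) * (x i + y m) - (x i + y j) * s = (x m - x i) * (y m - y j)"
      by (simp add: s_def algebra_simps)
    finally show ?thesis
      by (simp add: \<alpha>_def \<beta>_def mult_ac)
  qed
  have "det P = (\<Sum>j<Suc m. P $$ (m,j) * cofactor P m j)"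
    by (rule laplace_expansion_row[OF P_carrier]) simp
  also have "\<dots> = 1 / s * det (mat_delete P m m)"
    by (simp add: P_last_row cofactor_def)
  also have "mat_delete P m m = mat m m (\<lambda>(i,j). \<alpha> i * \<beta> j * (1 / (x i + y j)))"
    using P_carrier by (auto simp: mat_delete_def P_inner intro!: eq_matI)
  also have "det \<dots> = (\<Prod>i<m. \<alpha> i) * (\<Prod>j<m. \<beta> j) * det (cauchy_mat m x y)"
    unfolding cauchy_mat_def by (rule det_scale_rows_cols)
  finally show ?thesis
    by (simp add: det_P M_def s_def \<alpha>_def \<beta>_def prod.distrib[symmetric] mult_ac)
qed

theorem det_cauchy_mat:
  fixes x y :: "nat \<Rightarrow> 'a::field"
  assumes "\<And>a b. a < m \<Longrightarrow> b < m \<Longrightarrow> x a + y b \<noteq> 0"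
  shows "det (cauchy_mat m x y) = diff_prod x m * diff_prod y m / cross_sum_prod x y m"
  using assms
proof (induction m)
  case 0
  then show ?case by (simp add: cauchy_mat_def diff_prod_def cross_sum_prod_def)
next
  case (Suc m)
  define P1 where "P1 = (\<Prod>a<m. x a + y m)"
  define P2 where "P2 = (\<Prod>b<m. x m + y b)"
  define Dx where "Dx = (\<Prod>a<m. x a - x m)"
  define Dy where "Dy = (\<Prod>a<m. y a - y m)"
  have "P1 \<noteq> 0" "P2 \<noteq> 0" "x m + y m \<noteq> 0" "cross_sum_prod x y m \<noteq> 0"
    using Suc.prems by (auto simp: P1_def P2_def cross_sum_prod_def)
  moreover have "(\<Prod>a<m. (x m - x a) * (y m - y a) / ((x a + y m) * (x m + y a))) = Dx * Dy / (P1 * P2)"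
  proof -
    have "(x m - x a) * (y m - y a) = (x a - x m) * (y a - y m)" for a
      by (simp add: algebra_simps)
    then show ?thesis
      by (simp add: prod_dividef prod.distrib Dx_def Dy_def P1_def P2_def)
  qed
  ultimately show ?case
    using Suc by (simp add: det_cauchy_mat_Suc diff_prod_Suc cross_sum_prod_Suc
        flip: P1_def P2_def Dx_def Dy_def) (simp add: field_simps)
qed

lemma prod_insert_index:
  assumes "i < Suc m"
  shows "(\<Prod>a<m. f (insert_index i a)) = (\<Prod>a\<in>{..<Suc m} - {i}. f a)"
proof -
  have "(\<Prod>a\<in>{..<Suc m} - {i}. f a) = prod f (insert_index i ` {0..<m})"
    using insert_index_image[OF assms] by (simp add: lessThan_atLeast0)
  also have "\<dots> = (\<Prod>a<m. f (insert_index i a))"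
    by (simp add: prod.reindex[OF insert_index_inj_on] lessThan_atLeast0)
  finally show ?thesis ..
qed

lemma prod_split_insert_index:
  assumes "i < Suc m"
  shows "(\<Prod>a<Suc m. f a) = f i * (\<Prod>a<m. f (insert_index i a))"
proof -
  have "(\<Prod>a<Suc m. f a) = f i * (\<Prod>a\<in>{..<Suc m} - {i}. f a)"
    using assms by (intro prod.remove) auto
  then show ?thesis using assms by (simp only: prod_insert_index)
qed

lemma diff_prod_insert_index:
  fixes x :: "nat \<Rightarrow> 'a::comm_ring_1"
  assumes "i < Suc m"
  shows "diff_prod x (Suc m) =
    (-1) ^ i * diff_prod (x \<circ> insert_index i) m * (\<Prod>a\<in>{..<Suc m} - {i}. x i - x a)"
  using assms
proof (induction m arbitrary: i)
  case 0
  then show ?case by (simp add: diff_prod_def)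
next
  case (Suc m)
  show ?case
  proof (cases "i = Suc m")
    case True
    have "(\<Prod>a<i. x a - x i) = (\<Prod>a<i. (-1) * (x i - x a))" by simp
    also have "\<dots> = (-1) ^ i * (\<Prod>a<i. x i - x a)"
      by (simp only: prod.distrib prod_constant card_lessThan)
    finally have sign: "(\<Prod>a<i. x a - x i) = (-1) ^ i * (\<Prod>a<i. x i - x a)" .
    have same: "diff_prod (x \<circ> insert_index i) (Suc m) = diff_prod x (Suc m)"
      unfolding diff_prod_def using True by (intro prod.cong) auto
    have rest: "{..<Suc (Suc m)} - {i} = {..<i}" using True by auto
    show ?thesis
      unfolding diff_prod_Suc[of x "Suc m"] same rest unfolding True[symmetric] sign
      by (simp add: mult_ac)
  next
    case False
    then have i: "i < Suc m" using Suc.prems by simp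
    have "{..<Suc (Suc m)} - {i} = insert (Suc m) ({..<Suc m} - {i})" using i by auto
    then have split: "(\<Prod>a\<in>{..<Suc (Suc m)} - {i}. x i - x a) =
        (x i - x (Suc m)) * (\<Prod>a\<in>{..<Suc m} - {i}. x i - x a)"
      by simp
    have "diff_prod x (Suc (Suc m)) = diff_prod x (Suc m) * (\<Prod>a<Suc m. x a - x (Suc m))"
      by (rule diff_prod_Suc)
    also have "\<dots> = (-1) ^ i * diff_prod (x \<circ> insert_index i) m * (\<Prod>a\<in>{..<Suc m} - {i}. x i - x a)
        * ((x i - x (Suc m)) * (\<Prod>a<m. x (insert_index i a) - x (Suc m)))"
      by (simp only: Suc.IH[OF i] prod_split_insert_index[OF i])
    also have "\<dots> = (-1) ^ i * diff_prod (x \<circ> insert_index i) (Suc m)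
        * (\<Prod>a\<in>{..<Suc (Suc m)} - {i}. x i - x a)"
      using i by (simp add: diff_prod_Suc split mult_ac)
    finally show ?thesis .
  qed
qed

lemma cross_sum_prod_insert_index:
  fixes x y :: "nat \<Rightarrow> 'a::comm_ring_1"
  assumes i: "i < Suc m" and j: "j < Suc m"
  shows "cross_sum_prod x y (Suc m) =
    cross_sum_prod (x \<circ> insert_index i) (y \<circ> insert_index j) m
      * (\<Prod>b<Suc m. x i + y b) * (\<Prod>a\<in>{..<Suc m} - {i}. x a + y j)"
proof -
  have "cross_sum_prod x y (Suc m) =
      (\<Prod>b<Suc m. x i + y b) * (\<Prod>a<m. \<Prod>b<Suc m. x (insert_index i a) + y b)"
    unfolding cross_sum_prod_def by (rule prod_split_insert_index[OF i])
  also have "(\<Prod>a<m. \<Prod>b<Suc m. x (insert_index i a) + y b) =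
      (\<Prod>a<m. (x (insert_index i a) + y j) * (\<Prod>b<m. x (insert_index i a) + y (insert_index j b)))"
    by (intro prod.cong refl prod_split_insert_index[OF j])
  also have "\<dots> = (\<Prod>a\<in>{..<Suc m} - {i}. x a + y j)
      * cross_sum_prod (x \<circ> insert_index i) (y \<circ> insert_index j) m"
    by (simp add: prod.distrib cross_sum_prod_def prod_insert_index[OF i, of "\<lambda>a. x a + y j"])
  finally show ?thesis by (simp add: mult_ac)
qed

theorem cofactor_cauchy_mat:
  fixes x y :: "nat \<Rightarrow> 'a::field"
  assumes i: "i < n" and j: "j < n"
    and nz: "\<And>a b. a < n \<Longrightarrow> b < n \<Longrightarrow> x a + y b \<noteq> 0"
    and inj_x: "inj_on x {..<n}" and inj_y: "inj_on y {..<n}"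
  shows "cofactor (cauchy_mat n x y) i j =
    det (cauchy_mat n x y) * ((\<Prod>b<n. x i + y b) * (\<Prod>a\<in>{..<n} - {i}. x a + y j))
      / ((\<Prod>a\<in>{..<n} - {i}. x i - x a) * (\<Prod>b\<in>{..<n} - {j}. y j - y b))"
proof -
  obtain m where n: "n = Suc m" using i by (cases n) auto
  let ?x = "x \<circ> insert_index i" and ?y = "y \<circ> insert_index j"
  define px where "px = (\<Prod>a\<in>{..<n} - {i}. x i - x a)"
  define py where "py = (\<Prod>b\<in>{..<n} - {j}. y j - y b)"
  define R where "R = (\<Prod>b<n. x i + y b)"
  define S where "S = (\<Prod>a\<in>{..<n} - {i}. x a + y j)"
  have minor: "mat_delete (cauchy_mat n x y) i j = cauchy_mat m ?x ?y"
    by (auto simp: mat_delete_def cauchy_mat_def insert_index_def n intro!: eq_matI)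
  have nz': "?x a + ?y b \<noteq> 0" if "a < m" "b < m" for a b
    using nz that n by (auto simp: insert_index_def)
  have "px \<noteq> 0" "py \<noteq> 0"
    using i j by (auto simp: px_def py_def inj_on_eq_iff[OF inj_x] inj_on_eq_iff[OF inj_y])
  moreover have "R \<noteq> 0" "S \<noteq> 0" "cross_sum_prod ?x ?y m \<noteq> 0"
    using nz nz' i j by (auto simp: R_def S_def cross_sum_prod_def)
  moreover have "diff_prod x n = (-1) ^ i * diff_prod ?x m * px"
    "diff_prod y n = (-1) ^ j * diff_prod ?y m * py"
    "cross_sum_prod x y n = cross_sum_prod ?x ?y m * R * S"
    using i j unfolding n px_def py_def R_def S_def
    by (simp_all only: diff_prod_insert_index[of i m x] diff_prod_insert_index[of j m y]
        cross_sum_prod_insert_index[of i m j x y])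
  ultimately show ?thesis
    using nz nz' unfolding cofactor_def minor
    by (simp add: det_cauchy_mat px_def[symmetric] py_def[symmetric] R_def[symmetric]
        S_def[symmetric] field_simps power_add)
qed

lemma cofactor_sym_cauchy_mat_diag:
  fixes x :: "nat \<Rightarrow> 'a::field"
  assumes j: "j < n"
    and nz: "\<And>a b. a < n \<Longrightarrow> b < n \<Longrightarrow> x a + x b \<noteq> 0" and inj: "inj_on x {..<n}"
  shows "cofactor (cauchy_mat n x x) j j =
    det (cauchy_mat n x x) * (2 * x j * (\<Prod>k\<in>{0..<n} - {j}. (x k + x j)^2)
      / (\<Prod>k\<in>{0..<n} - {j}. (x k - x j)^2))"
proof -
  define Pp where "Pp = (\<Prod>k\<in>{0..<n} - {j}. x k + x j)"
  define Pm where "Pm = (\<Prod>k\<in>{0..<n} - {j}. x j - x k)"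
  have R: "(\<Prod>b<n. x j + x b) = (x j + x j) * Pp"
    unfolding Pp_def lessThan_atLeast0 using j by (subst prod.remove[of _ j]) (auto simp: add.commute)
  have S: "(\<Prod>a\<in>{..<n} - {j}. x a + x j) = Pp" unfolding Pp_def lessThan_atLeast0 ..
  have M: "(\<Prod>a\<in>{..<n} - {j}. x j - x a) = Pm" unfolding Pm_def lessThan_atLeast0 ..
  have sq_plus: "(\<Prod>k\<in>{0..<n} - {j}. (x k + x j)^2) = Pp^2"
    unfolding Pp_def prod_power_distrib ..
  have sq_minus: "(\<Prod>k\<in>{0..<n} - {j}. (x k - x j)^2) = Pm^2"
    unfolding Pm_def prod_power_distrib by (intro prod.cong refl) (simp add: power2_commute)
  have "Pm \<noteq> 0" using j by (auto simp: Pm_def inj_on_eq_iff[OF inj])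
  moreover have "cofactor (cauchy_mat n x x) j j = det (cauchy_mat n x x)
      * ((\<Prod>b<n. x j + x b) * (\<Prod>a\<in>{..<n} - {j}. x a + x j))
      / ((\<Prod>a\<in>{..<n} - {j}. x j - x a) * (\<Prod>b\<in>{..<n} - {j}. x j - x b))"
    by (rule cofactor_cauchy_mat[OF j j nz inj inj])
  ultimately show ?thesis
    unfolding R S M sq_plus sq_minus
    by (simp add: field_simps power2_eq_square)
qed

lemma cofactor_sym_cauchy_mat_off_diag:
  fixes x :: "nat \<Rightarrow> 'a::field"
  assumes i: "i < n" and j: "j < n" and ij: "i \<noteq> j"
    and nz: "\<And>a b. a < n \<Longrightarrow> b < n \<Longrightarrow> x a + x b \<noteq> 0" and inj: "inj_on x {..<n}"
  shows "cofactor (cauchy_mat n x x) i j =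
    - (det (cauchy_mat n x x) * (4 * x i * x j * (x i + x j) * (\<Prod>l\<in>{0..<n} - {i,j}. \<Prod>k\<in>{i,j}. x k + x l)
      / ((x j - x i)^2 * (\<Prod>l\<in>{0..<n} - {i,j}. \<Prod>k\<in>{i,j}. x k - x l))))"
proof -
  define L where "L = {0..<n} - {i,j}"
  define Pi where "Pi = (\<Prod>l\<in>L. x i + x l)"
  define Pj where "Pj = (\<Prod>l\<in>L. x j + x l)"
  define Mi where "Mi = (\<Prod>l\<in>L. x i - x l)"
  define Mj where "Mj = (\<Prod>l\<in>L. x j - x l)"
  have remove_other: "(\<Prod>a\<in>{0..<n} - {k}. f a) = f k' * (\<Prod>a\<in>L. f a)"
    if "k = i \<and> k' = j \<or> k = j \<and> k' = i" for f :: "nat \<Rightarrow> 'a" and k k'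
  proof -
    have "(\<Prod>a\<in>{0..<n} - {k}. f a) = f k' * (\<Prod>a\<in>{0..<n} - {k} - {k'}. f a)"
      using i j ij that by (intro prod.remove) auto
    also have "{0..<n} - {k} - {k'} = L" using that by (auto simp: L_def)
    finally show ?thesis .
  qed
  have R: "(\<Prod>b<n. x i + x b) = (x i + x i) * ((x i + x j) * Pi)"
    unfolding lessThan_atLeast0 using i
    by (subst prod.remove[of _ i]) (auto simp: remove_other[of i j "\<lambda>b. x i + x b"] Pi_def)
  have S: "(\<Prod>a\<in>{..<n} - {i}. x a + x j) = (x j + x j) * Pj"
    unfolding Pj_def lessThan_atLeast0 by (subst remove_other[of i j]) (auto simp: add.commute)
  have MI: "(\<Prod>a\<in>{..<n} - {i}. x i - x a) = (x i - x j) * Mi"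
    unfolding Mi_def lessThan_atLeast0 by (rule remove_other) simp
  have MJ: "(\<Prod>b\<in>{..<n} - {j}. x j - x b) = (x j - x i) * Mj"
    unfolding Mj_def lessThan_atLeast0 by (rule remove_other) simp
  have plus_pairs: "(\<Prod>l\<in>{0..<n} - {i,j}. \<Prod>k\<in>{i,j}. x k + x l) = Pi * Pj"
    unfolding Pi_def Pj_def L_def[symmetric] using ij by (simp add: prod.distrib)
  have minus_pairs: "(\<Prod>l\<in>{0..<n} - {i,j}. \<Prod>k\<in>{i,j}. x k - x l) = Mi * Mj"
    unfolding Mi_def Mj_def L_def[symmetric] using ij by (simp add: prod.distrib)
  have "Mi \<noteq> 0" "Mj \<noteq> 0" "x i - x j \<noteq> 0" "x j - x i \<noteq> 0"
    using i j ij by (auto simp: Mi_def Mj_def L_def inj_on_eq_iff[OF inj])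
  moreover have "cofactor (cauchy_mat n x x) i j = det (cauchy_mat n x x)
      * ((\<Prod>b<n. x i + x b) * (\<Prod>a\<in>{..<n} - {i}. x a + x j))
      / ((\<Prod>a\<in>{..<n} - {i}. x i - x a) * (\<Prod>b\<in>{..<n} - {j}. x j - x b))"
    by (rule cofactor_cauchy_mat[OF i j nz inj inj])
  moreover have "x j - x i = - (x i - x j)" by simp
  ultimately show ?thesis
    unfolding R S MI MJ plus_pairs minus_pairs
    by (simp add: field_simps power2_eq_square del: minus_diff_eq)
qed

lemma sum_cofactor_sym_cauchy_mat:
  fixes x a :: "nat \<Rightarrow> 'a::field"
  assumes j: "j < n"
    and nz: "\<And>a b. a < n \<Longrightarrow> b < n \<Longrightarrow> x a + x b \<noteq> 0" and inj: "inj_on x {..<n}"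
  shows "(\<Sum>i<n. 2 / a i * cofactor (cauchy_mat n x x) i j) =
    det (cauchy_mat n x x) *
      (4 * x j * (\<Prod>k\<in>{0..<n} - {j}. (x k + x j)^2) / (a j * (\<Prod>k\<in>{0..<n} - {j}. (x k - x j)^2))
       - (\<Sum>i\<in>{0..<n} - {j}. 8 * x i * x j * (x i + x j) *
            (\<Prod>l\<in>{0..<n} - {i,j}. \<Prod>k\<in>{i,j}. x k + x l) /
            (a i * (x j - x i)^2 * (\<Prod>l\<in>{0..<n} - {i,j}. \<Prod>k\<in>{i,j}. x k - x l))))"
proof -
  let ?C = "cauchy_mat n x x"
  have "(\<Sum>i<n. 2 / a i * cofactor ?C i j) =
      2 / a j * cofactor ?C j j + (\<Sum>i\<in>{0..<n} - {j}. 2 / a i * cofactor ?C i j)"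
    unfolding lessThan_atLeast0 using j by (subst sum.remove[of _ j]) auto
  also have "2 / a j * cofactor ?C j j = det ?C *
      (4 * x j * (\<Prod>k\<in>{0..<n} - {j}. (x k + x j)^2) / (a j * (\<Prod>k\<in>{0..<n} - {j}. (x k - x j)^2)))"
    by (simp add: cofactor_sym_cauchy_mat_diag[OF j nz inj])
  also have "(\<Sum>i\<in>{0..<n} - {j}. 2 / a i * cofactor ?C i j) =
      (\<Sum>i\<in>{0..<n} - {j}. - (det ?C * (8 * x i * x j * (x i + x j) *
            (\<Prod>l\<in>{0..<n} - {i,j}. \<Prod>k\<in>{i,j}. x k + x l) /
            (a i * (x j - x i)^2 * (\<Prod>l\<in>{0..<n} - {i,j}. \<Prod>k\<in>{i,j}. x k - x l)))))"
    using j by (intro sum.cong refl) (simp add: cofactor_sym_cauchy_mat_off_diag[OF _ j _ nz inj] mult_ac)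
  finally show ?thesis by (simp add: sum_negf sum_distrib_left right_diff_distrib)
qed

theorem det_sym_cauchy_plus_rank_one:
  fixes x a :: "nat \<Rightarrow> 'a::field"
  assumes nz: "\<And>a b. a < n \<Longrightarrow> b < n \<Longrightarrow> x a + x b \<noteq> 0" and inj: "inj_on x {..<n}"
  shows "det (mat n n (\<lambda>(i,j). K / (x i + x j) + 2 * e * K / (a i * a j))) =
    (1 + (\<Sum>j\<in>{0..<n}. e / a j *
        (4 * x j * (\<Prod>k\<in>{0..<n} - {j}. (x k + x j)^2) / (a j * (\<Prod>k\<in>{0..<n} - {j}. (x k - x j)^2))
         - (\<Sum>i\<in>{0..<n} - {j}. 8 * x i * x j * (x i + x j) *
              (\<Prod>l\<in>{0..<n} - {i,j}. \<Prod>k\<in>{i,j}. x k + x l) /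
              (a i * (x j - x i)^2 * (\<Prod>l\<in>{0..<n} - {i,j}. \<Prod>k\<in>{i,j}. x k - x l))))))
     * (\<Prod>j\<in>{0..<n}. \<Prod>i\<in>{0..<j}. (x i - x j)^2) / (\<Prod>i\<in>{0..<n}. \<Prod>j\<in>{0..<n}. x i + x j)
     * K ^ n"
proof -
  define C where "C = cauchy_mat n x x"
  define T where "T = (\<lambda>j.
         4 * x j * (\<Prod>k\<in>{0..<n} - {j}. (x k + x j)^2) / (a j * (\<Prod>k\<in>{0..<n} - {j}. (x k - x j)^2))
         - (\<Sum>i\<in>{0..<n} - {j}. 8 * x i * x j * (x i + x j) *
              (\<Prod>l\<in>{0..<n} - {i,j}. \<Prod>k\<in>{i,j}. x k + x l) /
              (a i * (x j - x i)^2 * (\<Prod>l\<in>{0..<n} - {i,j}. \<Prod>k\<in>{i,j}. x k - x l))))"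
  have C_carrier: "C \<in> carrier_mat n n" by (simp add: C_def cauchy_mat_def)
  have "det C = diff_prod x n * diff_prod x n / cross_sum_prod x x n"
    unfolding C_def by (rule det_cauchy_mat[OF nz])
  then have det_C: "det C =
      (\<Prod>j\<in>{0..<n}. \<Prod>i\<in>{0..<j}. (x i - x j)^2) / (\<Prod>i\<in>{0..<n}. \<Prod>j\<in>{0..<n}. x i + x j)"
    by (simp add: diff_prod_def cross_sum_prod_def lessThan_atLeast0 power2_eq_square prod.distrib)
  have split: "mat n n (\<lambda>(i,j). K / (x i + x j) + 2 * e * K / (a i * a j)) =
      K \<cdot>\<^sub>m C + mat n n (\<lambda>(i,j). 2 / a i * (e * K / a j))"
    by (auto simp: C_def cauchy_mat_def intro!: eq_matI)
  have "det (mat n n (\<lambda>(i,j). K / (x i + x j) + 2 * e * K / (a i * a j))) =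
      det (K \<cdot>\<^sub>m C) + (\<Sum>i<n. \<Sum>j<n. 2 / a i * (e * K / a j) * cofactor (K \<cdot>\<^sub>m C) i j)"
    unfolding split by (rule det_plus_rank_one) (simp add: C_carrier)
  also have "(\<Sum>i<n. \<Sum>j<n. 2 / a i * (e * K / a j) * cofactor (K \<cdot>\<^sub>m C) i j) =
      (\<Sum>j<n. e / a j * K ^ n * (\<Sum>i<n. 2 / a i * cofactor C i j))"
  proof (cases "n = 0")
    case False
    then have "K ^ n = K * K ^ (n - 1)" by (simp flip: power_Suc)
    then show ?thesis
      using C_carrier False
      by (subst sum.swap) (auto simp: cofactor_smult sum_distrib_left mult_ac intro!: sum.cong)
  qed simp
  also have "\<dots> = (\<Sum>j<n. e / a j * K ^ n * (det C * T j))"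
    unfolding C_def T_def
    by (intro sum.cong refl) (simp only: sum_cofactor_sym_cauchy_mat[OF _ nz inj] lessThan_iff)
  finally have "det (mat n n (\<lambda>(i,j). K / (x i + x j) + 2 * e * K / (a i * a j))) =
      (1 + (\<Sum>j\<in>{0..<n}. e / a j * T j)) * det C * K ^ n"
    using C_carrier by (simp add: lessThan_atLeast0 sum_distrib_left sum_distrib_right algebra_simps)
  then show ?thesis
    unfolding det_C T_def by simp
qed

section \<open>The covariance matrix\<close>

lemma Sigma_eq_sym_cauchy_plus_rank_one:
  fixes V c :: real and d :: nat
  assumes "c > 0"
  defines "K \<equiv> if c \<le> 1 then V * real d * kappa d / 2 else V * real d * kappa d / (2 * c)"
  shows "Sigma n d V c \<tau> = mat n n (\<lambda>(i,j). K / (xx d \<tau> i + xx d \<tau> j)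
    + 2 * (c * real d * kappa d) * K / (aa d \<tau> i * aa d \<tau> j))"
  using assms
  by (auto simp: Sigma_def Sigma_sb_def Sigma_sp_def K_def power2_eq_square algebra_simps intro!: eq_matI)

theorem theorem7p3:
  fixes n d :: nat and V c :: real and \<tau> :: "nat \<Rightarrow> real"
  assumes "d \<ge> 1" and "n \<ge> 2" and "V \<ge> 0" and "c > 0"
    and "\<And>i. i < n \<Longrightarrow> - real d / 2 < \<tau> i"
    and "\<And>i j. i < j \<Longrightarrow> j < n \<Longrightarrow> \<tau> i < \<tau> j"
  shows "(c \<le> 1 \<longrightarrow> det (Sigma n d V c \<tau>) = DD n d c \<tau> * (V * real d * kappa d / 2) ^ n)
       \<and> (c > 1 \<longrightarrow> det (Sigma n d V c \<tau>) = DD n d c \<tau> * (V * real d * kappa d / (2 * c)) ^ n)"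
proof -
  \<comment> \<open>The identity is algebraic: besides \<open>c > 0\<close> it only needs \<open>x_i + x_j \<noteq> 0\<close> and distinct \<open>x_i\<close>.\<close>
  have nz: "xx d \<tau> i + xx d \<tau> j \<noteq> 0" if "i < n" "j < n" for i j
    using assms(5)[OF that(1)] assms(5)[OF that(2)] by (simp add: xx_def)
  have "strict_mono_on {..<n} (xx d \<tau>)"
    by (rule strict_mono_onI) (simp add: xx_def assms(6))
  then have inj: "inj_on (xx d \<tau>) {..<n}"
    by (rule strict_mono_on_imp_inj_on)
  have "det (Sigma n d V c \<tau>) =
      DD n d c \<tau> * (if c \<le> 1 then V * real d * kappa d / 2 else V * real d * kappa d / (2 * c)) ^ n"
    unfolding Sigma_eq_sym_cauchy_plus_rank_one[OF \<open>c > 0\<close>] DD_def Let_def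
    by (rule det_sym_cauchy_plus_rank_one[OF nz inj])
  then show ?thesis by auto
qed

end
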